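(* Let $M$ be observation-rational, and suppose there exists an event $e\in\varepsilon$ that is event-rational and such that $\alpha$ is an $e$-signal. Then for every belief state $b$, $b\diamond\alpha$ is a belief state if and only if $\alpha$ is satisfiable (i.e. not $\vdash\lnot\alpha$).
   Context: Fix a finite propositional vocabulary; $L$ is the classical propositional language and $W$ the finite set of all worlds (valuations). "$\vdash\lnot\alpha$" means $\alpha$ is unsatisfiable. A belief state is a probability distribution $b$ on $W$. A model is $M=\langle W,\varepsilon,T,E,O,\mathit{os}\rangle$ with $\varepsilon$ a finite set of events; $T:W\times\varepsilon\times W\to[0,1]$ with $\sum_{w'}T(w,e,w')=1$ for all $w,e$; $E(e,w)\in[0,1]$ the probability of $e$ in $w$; $O:L\times W\to[0,1]$ an observation function ($O(\alpha,w)$ = probability of observing $\alpha$ in $w$, equal for equivalent sentences); $\mathit{os}:L\times W\to[0,1]$. Update: $(b\diamond\alpha)(w')=\frac1\gamma O(\alpha,w')\sum_{w\in W}\sum_{e\in\varepsilon}T(w,e,w')E(e,w)b(w)$ with $\gamma$ the normalizing sum; $b\diamond\alpha$ is a belief state iff $\gamma>0$ and undefined otherwise. $M$ is observation-rational iff for every $\alpha$ with $\vdash\lnot\alpha$, $O(\alpha,w)=0$ for all $w$. An event $e$ is event-rational iff for all $w\in W$: there exists $w'$ with $T(w,e,w')>0$ iff $E(e,w)>0$. $\alpha$ is an $e$-signal iff for all $w'\in W$: there exists $w$ with $T(w,e,w')>0$ iff $O(\alpha,w')>0$. *)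

theory Defs
  imports Complex_Main
begin

datatype 'v form =
    Atom 'v
  | FTrue
  | FFalse
  | Neg "'v form"
  | Conj "'v form" "'v form"
  | Disj "'v form" "'v form"
  | Impl "'v form" "'v form"

type_synonym 'v world = "'v \<Rightarrow> bool"

fun sat :: "'v world \<Rightarrow> 'v form \<Rightarrow> bool" where
  "sat w (Atom p) = w p"
| "sat w FTrue = True"
| "sat w FFalse = False"
| "sat w (Neg a) = (\<not> sat w a)"
| "sat w (Conj a b) = (sat w a \<and> sat w b)"
| "sat w (Disj a b) = (sat w a \<or> sat w b)"
| "sat w (Impl a b) = (sat w a \<longrightarrow> sat w b)"

text \<open>\<turnstile> \<not>\<alpha>: alpha is unsatisfiable.\<close>
definition proves_neg :: "'v form \<Rightarrow> bool" where
  "proves_neg a \<longleftrightarrow> (\<forall>w. \<not> sat w a)"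

definition equiv_form :: "'v form \<Rightarrow> 'v form \<Rightarrow> bool" where
  "equiv_form a c \<longleftrightarrow> (\<forall>w. sat w a = sat w c)"

definition belief_state :: "('v::finite world \<Rightarrow> real) \<Rightarrow> bool" where
  "belief_state b \<longleftrightarrow> (\<forall>w. 0 \<le> b w) \<and> (\<Sum>w\<in>UNIV. b w) = 1"

text \<open>A model M = (W, eps, T, E, O, os); W is UNIV of worlds.\<close>
record ('v, 'e) model =
  events :: "'e set"
  trans :: "'v world \<Rightarrow> 'e \<Rightarrow> 'v world \<Rightarrow> real"
  evprob :: "'e \<Rightarrow> 'v world \<Rightarrow> real"
  obs :: "'v form \<Rightarrow> 'v world \<Rightarrow> real"
  os :: "'v form \<Rightarrow> 'v world \<Rightarrow> real"

definition is_model :: "('v::finite, 'e) model \<Rightarrow> bool" where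
  "is_model M \<longleftrightarrow>
     finite (events M)
   \<and> (\<forall>w e w'. 0 \<le> trans M w e w' \<and> trans M w e w' \<le> 1)
   \<and> (\<forall>w e. (\<Sum>w'\<in>UNIV. trans M w e w') = 1)
   \<and> (\<forall>e w. 0 \<le> evprob M e w \<and> evprob M e w \<le> 1)
   \<and> (\<forall>a w. 0 \<le> obs M a w \<and> obs M a w \<le> 1)
   \<and> (\<forall>a c w. equiv_form a c \<longrightarrow> obs M a w = obs M c w)
   \<and> (\<forall>a w. 0 \<le> os M a w \<and> os M a w \<le> 1)"

definition gamma :: "('v::finite, 'e) model \<Rightarrow> ('v world \<Rightarrow> real) \<Rightarrow> 'v form \<Rightarrow> real" where
  "gamma M b a = (\<Sum>w'\<in>UNIV. obs M a w' *
       (\<Sum>w\<in>UNIV. \<Sum>e\<in>events M. trans M w e w' * evprob M e w * b w))"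

definition update :: "('v::finite, 'e) model \<Rightarrow> ('v world \<Rightarrow> real) \<Rightarrow> 'v form
                       \<Rightarrow> ('v world \<Rightarrow> real) option" where
  "update M b a =
     (if gamma M b a > 0 then
        Some (\<lambda>w'. (1 / gamma M b a) * obs M a w' *
          (\<Sum>w\<in>UNIV. \<Sum>e\<in>events M. trans M w e w' * evprob M e w * b w))
      else None)"

definition observation_rational :: "('v::finite, 'e) model \<Rightarrow> bool" where
  "observation_rational M \<longleftrightarrow> (\<forall>a. proves_neg a \<longrightarrow> (\<forall>w. obs M a w = 0))"

definition event_rational :: "('v::finite, 'e) model \<Rightarrow> 'e \<Rightarrow> bool" where
  "event_rational M e \<longleftrightarrow> (\<forall>w. (\<exists>w'. trans M w e w' > 0) \<longleftrightarrow> evprob M e w > 0)"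

definition is_signal :: "('v::finite, 'e) model \<Rightarrow> 'v form \<Rightarrow> 'e \<Rightarrow> bool" where
  "is_signal M a e \<longleftrightarrow> (\<forall>w'. (\<exists>w. trans M w e w' > 0) \<longleftrightarrow> obs M a w' > 0)"

end

theory Submission
  imports Defs
begin

text \<open>The normalising constant \<open>\<gamma>\<close> is the expected value of \<open>O(\<alpha>, \<cdot>)\<close> under the predicted
  distribution \<open>w' \<mapsto> \<Sum>\<^sub>w \<Sum>\<^sub>e T(w,e,w') E(e,w) b(w)\<close>. If \<open>\<alpha>\<close> is unsatisfiable, observation
  rationality makes \<open>O(\<alpha>, \<cdot>)\<close> vanish, so \<open>\<gamma> = 0\<close>. Conversely, pick a world \<open>w\<close> with \<open>b(w) > 0\<close>
  and, as \<open>T(w,e,\<cdot>)\<close> sums to one, a successor \<open>w'\<close> with \<open>T(w,e,w') > 0\<close>; event rationality gives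
  \<open>E(e,w) > 0\<close> and the signal property gives \<open>O(\<alpha>,w') > 0\<close>, so the single term at \<open>(w, e, w')\<close>
  already makes \<open>\<gamma>\<close> positive. Whenever \<open>\<gamma> > 0\<close> the normalised update is a belief state.\<close>

definition predicted :: "('v::finite, 'e) model \<Rightarrow> ('v world \<Rightarrow> real) \<Rightarrow> 'v world \<Rightarrow> real" where
  "predicted M b w' = (\<Sum>w\<in>UNIV. \<Sum>e\<in>events M. trans M w e w' * evprob M e w * b w)"

lemma sum_nonneg_eq_1_obtains_pos:
  fixes f :: "'a \<Rightarrow> real"
  assumes "\<And>x. x \<in> A \<Longrightarrow> 0 \<le> f x" and "sum f A = 1"
  obtains x where "x \<in> A" and "0 < f x"
proof -
  have "\<not> (\<forall>x\<in>A. f x = 0)" using assms(2) sum.neutral by fastforce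
  then show thesis using assms(1) that by force
qed

lemma predicted_nonneg:
  assumes "is_model M" and "\<And>w. 0 \<le> b w"
  shows "0 \<le> predicted M b w'"
  using assms unfolding predicted_def is_model_def
  by (intro sum_nonneg mult_nonneg_nonneg) auto

lemma gamma_eq_sum_predicted:
  "gamma M b a = (\<Sum>w'\<in>UNIV. obs M a w' * predicted M b w')"
  unfolding gamma_def predicted_def ..

lemma update_eq_normalised_predicted:
  "update M b a =
     (if gamma M b a > 0 then Some (\<lambda>w'. obs M a w' * predicted M b w' / gamma M b a) else None)"
  unfolding update_def predicted_def by simp

lemma gamma_eq_0_if_unsatisfiable:
  assumes "observation_rational M" and "proves_neg a"
  shows "gamma M b a = 0"
  using assms unfolding observation_rational_def gamma_eq_sum_predicted by simp

lemma update_belief_state_iff_gamma_pos: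
  assumes "is_model M" and "\<And>w. 0 \<le> b w"
  shows "(\<exists>b'. update M b a = Some b' \<and> belief_state b') \<longleftrightarrow> gamma M b a > 0"
proof
  assume pos: "gamma M b a > 0"
  have "0 \<le> obs M a w'" for w' using assms(1) unfolding is_model_def by auto
  with pos predicted_nonneg[OF assms] have "0 \<le> obs M a w' * predicted M b w' / gamma M b a" for w'
    by simp
  moreover have "(\<Sum>w'\<in>UNIV. obs M a w' * predicted M b w' / gamma M b a) = 1"
    using pos by (simp add: gamma_eq_sum_predicted flip: sum_divide_distrib)
  ultimately show "\<exists>b'. update M b a = Some b' \<and> belief_state b'"
    using pos by (simp add: update_eq_normalised_predicted belief_state_def)
qed (auto simp: update_eq_normalised_predicted split: if_splits)

lemma gamma_pos_if_signal:
  assumes M: "is_model M" and b: "belief_state b"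
    and e: "e \<in> events M" "event_rational M e" "is_signal M a e"
  shows "gamma M b a > 0"
proof -
  from M have fin: "finite (events M)"
    and T: "\<And>w e w'. 0 \<le> trans M w e w'" "\<And>w e. (\<Sum>w'\<in>UNIV. trans M w e w') = 1"
    and E: "\<And>e w. 0 \<le> evprob M e w" and O: "\<And>a w. 0 \<le> obs M a w"
    unfolding is_model_def by auto
  from b have bnn: "\<And>w. 0 \<le> b w" and "sum b UNIV = 1" unfolding belief_state_def by auto
  then obtain w where bw: "0 < b w" by (rule sum_nonneg_eq_1_obtains_pos)
  obtain w' where Tw: "0 < trans M w e w'" using T by (rule sum_nonneg_eq_1_obtains_pos)
  have Ew: "0 < evprob M e w" using e(2) Tw unfolding event_rational_def by blast
  have Ow: "0 < obs M a w'" using e(3) Tw unfolding is_signal_def by blast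
  have "0 < trans M w e w' * evprob M e w * b w" using bw Tw Ew by simp
  also have "\<dots> \<le> (\<Sum>e\<in>events M. trans M w e w' * evprob M e w * b w)"
    using e(1) fin T E bnn by (intro member_le_sum mult_nonneg_nonneg) auto
  also have "\<dots> \<le> predicted M b w'"
    unfolding predicted_def using T E bnn
    by (intro member_le_sum[where f = "\<lambda>w. \<Sum>e\<in>events M. trans M w e w' * evprob M e w * b w"]
        sum_nonneg mult_nonneg_nonneg) auto
  finally have "0 < obs M a w' * predicted M b w'" using Ow by simp
  also have "\<dots> \<le> gamma M b a"
    unfolding gamma_eq_sum_predicted using O predicted_nonneg[OF M bnn]
    by (intro member_le_sum mult_nonneg_nonneg) auto
  finally show ?thesis .
qed

theorem proposition3:
  fixes M :: "('v::finite, 'e) model" and a :: "'v form"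
  assumes "is_model M"
    and "observation_rational M"
    and "\<exists>e\<in>events M. event_rational M e \<and> is_signal M a e"
  shows "\<forall>b. belief_state b \<longrightarrow>
           ((\<exists>b'. update M b a = Some b' \<and> belief_state b') \<longleftrightarrow> \<not> proves_neg a)"
proof (intro allI impI)
  fix b :: "'v world \<Rightarrow> real"
  assume b: "belief_state b"
  then have "\<And>w. 0 \<le> b w" unfolding belief_state_def by auto
  moreover have "gamma M b a > 0"
    using assms(3) gamma_pos_if_signal[OF assms(1) b] by blast
  ultimately show "(\<exists>b'. update M b a = Some b' \<and> belief_state b') \<longleftrightarrow> \<not> proves_neg a"
    using update_belief_state_iff_gamma_pos[OF assms(1)] gamma_eq_0_if_unsatisfiable[OF assms(2)]
    by fastforce
qed

end
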